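(* Let $\ell>0$, $T>0$, $0<\alpha<1$, $0<\varepsilon<1$, $\gamma\in\mathbb R$, and $\Omega=\{(x,t):0\le x\le\ell,\ 0\le t\le T\}$. Let $u=u(x,t,\varepsilon)$ be the (regular) solution of $$\partial_{xx}(\varepsilon u_t+u)-\partial_t(u_t+\alpha u)=\sin u+\gamma\ \text{ in }\Omega,$$ $$u(x,0)=h_0(x),\quad u_t(x,0)=h_1(x)\ (x\in[0,\ell]),\qquad u_x(0,t)=\varphi_0(t),\quad u_x(\ell,t)=\varphi_1(t)\ (0\le t\le T),$$ and let $U=U(x,t)$ be a solution of $$U_{xx}-\partial_t(U_t+\alpha U)=\sin U+\gamma\ \text{ in }\Omega$$ with the same initial data $h_0,h_1$ and the same Neumann data $\varphi_0,\varphi_1$. Let $d=u-U$ and $S(t)=\sup_{0\le x\le\ell}|d(x,t)|$. Suppose there is a positive constant $b$ with $|U_{xxt}(x,t)|\le b$ on $\Omega$. Let $0<k<\alpha$ and $T_\varepsilon=\log(1/\varepsilon^k)$. Then there exists a positive constant $\Gamma$, independent of $\varepsilon$, such that for all $1\le t<T_\varepsilon$ $$0\le S(t)\le \Gamma\,\varepsilon^{1-k/\alpha}\log\Bigl(\frac{1}{\varepsilon^k}\Bigr).$$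
   Context: The first problem is the Neumann initial-boundary value problem for the perturbed sine-Gordon equation $u_{xx}-u_{tt}=\sin u+\gamma+\alpha u_t-\varepsilon u_{xxt}$; the second is its reduced (hyperbolic) problem obtained at $\varepsilon=0$. *)

theory Defs
  imports "HOL-Analysis.Analysis"
begin

definition Rect :: "real \<Rightarrow> real \<Rightarrow> (real \<times> real) set" where
  "Rect l T = {0..l} \<times> {0..T}"

definition has_dx :: "real \<Rightarrow> real \<Rightarrow> (real \<Rightarrow> real \<Rightarrow> real) \<Rightarrow> (real \<Rightarrow> real \<Rightarrow> real) \<Rightarrow> bool" where
  "has_dx l T f g \<longleftrightarrow> (\<forall>x\<in>{0..l}. \<forall>t\<in>{0..T}.
      ((\<lambda>y. f y t) has_real_derivative g x t) (at x within {0..l}))"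

definition has_dt :: "real \<Rightarrow> real \<Rightarrow> (real \<Rightarrow> real \<Rightarrow> real) \<Rightarrow> (real \<Rightarrow> real \<Rightarrow> real) \<Rightarrow> bool" where
  "has_dt l T f g \<longleftrightarrow> (\<forall>x\<in>{0..l}. \<forall>t\<in>{0..T}.
      ((\<lambda>s. f x s) has_real_derivative g x t) (at t within {0..T}))"

definition cont_rect :: "real \<Rightarrow> real \<Rightarrow> (real \<Rightarrow> real \<Rightarrow> real) \<Rightarrow> bool" where
  "cont_rect l T f \<longleftrightarrow> continuous_on (Rect l T) (\<lambda>(x,t). f x t)"

definition regular_sol ::
  "real \<Rightarrow> real \<Rightarrow> real \<Rightarrow> real \<Rightarrow> real \<Rightarrow> (real \<Rightarrow> real) \<Rightarrow> (real \<Rightarrow> real) \<Rightarrow>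
   (real \<Rightarrow> real) \<Rightarrow> (real \<Rightarrow> real) \<Rightarrow> (real \<Rightarrow> real \<Rightarrow> real) \<Rightarrow> bool" where
  "regular_sol l T \<alpha> \<gamma> \<epsilon> h0 h1 \<phi>0 \<phi>1 u \<longleftrightarrow>
    (\<exists>ux uxx ut utt uxt uxxt.
       cont_rect l T u \<and> cont_rect l T ux \<and> cont_rect l T uxx \<and> cont_rect l T ut \<and>
       cont_rect l T utt \<and> cont_rect l T uxt \<and> cont_rect l T uxxt \<and>
       has_dx l T u ux \<and> has_dx l T ux uxx \<and> has_dt l T u ut \<and> has_dt l T ut utt \<and>
       has_dx l T ut uxt \<and> has_dx l T uxt uxxt \<and>
       (\<forall>x\<in>{0..l}. \<forall>t\<in>{0..T}.
          (\<epsilon> * uxxt x t + uxx x t) - (utt x t + \<alpha> * ut x t) = sin (u x t) + \<gamma>) \<and>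
       (\<forall>x\<in>{0..l}. u x 0 = h0 x \<and> ut x 0 = h1 x) \<and>
       (\<forall>t\<in>{0..T}. ux 0 t = \<phi>0 t \<and> ux l t = \<phi>1 t))"

definition reduced_sol_bounded ::
  "real \<Rightarrow> real \<Rightarrow> real \<Rightarrow> real \<Rightarrow> (real \<Rightarrow> real) \<Rightarrow> (real \<Rightarrow> real) \<Rightarrow>
   (real \<Rightarrow> real) \<Rightarrow> (real \<Rightarrow> real) \<Rightarrow> real \<Rightarrow> (real \<Rightarrow> real \<Rightarrow> real) \<Rightarrow> bool" where
  "reduced_sol_bounded l T \<alpha> \<gamma> h0 h1 \<phi>0 \<phi>1 b U \<longleftrightarrow>
    (\<exists>Ux Uxx Ut Utt Uxxt.
       cont_rect l T U \<and> cont_rect l T Ux \<and> cont_rect l T Uxx \<and> cont_rect l T Ut \<and>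
       cont_rect l T Utt \<and>
       has_dx l T U Ux \<and> has_dx l T Ux Uxx \<and> has_dt l T U Ut \<and> has_dt l T Ut Utt \<and>
       has_dt l T Uxx Uxxt \<and>
       (\<forall>x\<in>{0..l}. \<forall>t\<in>{0..T}.
          Uxx x t - (Utt x t + \<alpha> * Ut x t) = sin (U x t) + \<gamma>) \<and>
       (\<forall>x\<in>{0..l}. U x 0 = h0 x \<and> Ut x 0 = h1 x) \<and>
       (\<forall>t\<in>{0..T}. Ux 0 t = \<phi>0 t \<and> Ux l t = \<phi>1 t) \<and>
       (\<forall>x\<in>{0..l}. \<forall>t\<in>{0..T}. \<bar>Uxxt x t\<bar> \<le> b))"

end

theory Submission
  imports Defs
begin

text \<open>The difference \<open>w = u - U\<close> has zero initial and zero Neumann data and satisfies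
  \<open>w\<^sub>t\<^sub>t = w\<^sub>x\<^sub>x - \<alpha> w\<^sub>t - (sin u - sin U) + \<epsilon> u\<^sub>x\<^sub>x\<^sub>t\<close>.
  For the energy \<open>E(t) = \<integral> w\<^sup>2 + w\<^sub>t\<^sup>2 + w\<^sub>x\<^sup>2 dx\<close>, integration by parts turns the viscous term
  into \<open>\<epsilon> \<integral> w\<^sub>t U\<^sub>x\<^sub>x\<^sub>t\<close> minus the dissipation \<open>\<epsilon> \<integral> w\<^sub>x\<^sub>t\<^sup>2\<close>, so
  \<open>E' \<le> 3 E + \<epsilon>\<^sup>2 b\<^sup>2 l\<close> and Gronwall's inequality gives \<open>E(t) \<le> \<epsilon>\<^sup>2 b\<^sup>2 l T e\<^sup>3\<^sup>T\<close>.
  A one-dimensional Sobolev inequality turns this into \<open>|w| \<le> \<Gamma> \<epsilon>\<close> on the whole rectangle, which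
  is stronger than the claimed rate because \<open>\<epsilon> \<le> \<epsilon>\<^sup>1\<^sup>-\<^sup>k\<^sup>/\<^sup>\<alpha> log(1/\<epsilon>\<^sup>k)\<close> once \<open>log(1/\<epsilon>\<^sup>k) \<ge> 1\<close>.

  Every exchange of a derivative with an integral rests on dominated convergence, and the bound
  \<open>|U\<^sub>x\<^sub>x\<^sub>t| \<le> b\<close> is what makes it available where \<open>U\<close> is not known to be smooth.\<close>

lemma has_real_derivative_unique_Icc:
  fixes f :: "real \<Rightarrow> real"
  assumes "c < d" "t \<in> {c..d}"
    and "(f has_real_derivative D) (at t within {c..d})"
    and "(f has_real_derivative D') (at t within {c..d})"
  shows "D = D'"
  using vector_derivative_unique_within_closed_interval[of c d t f D D'] assms
  by (simp add: has_real_derivative_iff_has_vector_derivative)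

lemma has_field_derivative_transform_on:
  assumes "(f has_field_derivative D) (at x within S)" "x \<in> S" "\<And>y. y \<in> S \<Longrightarrow> f y = g y"
  shows "(g has_field_derivative D) (at x within S)"
  using assms by (auto intro: has_field_derivative_transform_within[OF _ zero_less_one])

lemma has_real_derivative_within_imp_continuous_on:
  fixes f :: "real \<Rightarrow> real"
  assumes "\<And>x. x \<in> S \<Longrightarrow> (f has_real_derivative f' x) (at x within S)"
  shows "continuous_on S f"
  using assms by (meson DERIV_continuous continuous_on_eq_continuous_within)

lemma abs_mult_le:
  fixes a c A C :: real
  assumes "\<bar>a\<bar> \<le> A" "\<bar>c\<bar> \<le> C"
  shows "\<bar>a * c\<bar> \<le> A * C"
  unfolding abs_mult using assms by (intro mult_mono') auto

lemma abs_two_mult_le_sum_squares: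
  fixes p q :: real
  shows "\<bar>2 * p * q\<bar> \<le> p\<^sup>2 + q\<^sup>2"
  using sum_squares_bound[of "\<bar>p\<bar>" "\<bar>q\<bar>"] by (simp add: abs_mult power2_eq_square)

lemma abs_sin_diff_le: "\<bar>sin p - sin q\<bar> \<le> \<bar>p - q :: real\<bar>"
  using field_differentiable_bound[of UNIV sin cos 1 p q]
  by (auto intro: DERIV_sin abs_cos_le_one)

lemma continuous_on_compact_abs_bound:
  fixes f :: "'a::topological_space \<Rightarrow> real"
  assumes "compact S" "continuous_on S f"
  obtains B where "\<And>x. x \<in> S \<Longrightarrow> \<bar>f x\<bar> \<le> B"
proof -
  have "bounded (f ` S)" using assms by (intro compact_imp_bounded compact_continuous_image)
  then show ?thesis using that unfolding bounded_iff by fastforce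
qed

lemma has_integral_product_rule:
  fixes f g f' g' :: "real \<Rightarrow> real"
  assumes "a \<le> b"
    and "\<And>x. x \<in> {a..b} \<Longrightarrow> (f has_real_derivative f' x) (at x within {a..b})"
    and "\<And>x. x \<in> {a..b} \<Longrightarrow> (g has_real_derivative g' x) (at x within {a..b})"
  shows "((\<lambda>x. f' x * g x + f x * g' x) has_integral f b * g b - f a * g a) {a..b}"
proof -
  have "((\<lambda>x. f x * g x) has_vector_derivative f' x * g x + f x * g' x) (at x within {a..b})"
    if "x \<in> {a..b}" for x
    using DERIV_mult'[OF assms(2,3)[OF that]]
    by (simp add: has_real_derivative_iff_has_vector_derivative add.commute)
  from fundamental_theorem_of_calculus[OF assms(1) this] show ?thesis by simp
qed

lemma self_le_powr_mult:
  fixes \<epsilon> p L :: real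
  assumes "0 < \<epsilon>" "\<epsilon> \<le> 1" "p \<le> 1" "1 \<le> L"
  shows "\<epsilon> \<le> \<epsilon> powr p * L"
proof -
  have "\<epsilon> = \<epsilon> powr 1" using assms by simp
  also have "\<dots> \<le> \<epsilon> powr p" using assms by (intro powr_mono') auto
  also have "\<dots> \<le> \<epsilon> powr p * L" using assms by (intro mult_le_cancel_left1[THEN iffD2]) auto
  finally show ?thesis .
qed

section \<open>Differentiation of parameter-dependent integrals\<close>

text \<open>By the mean value theorem the difference quotients of \<open>F\<close> are dominated by \<open>M\<close>.\<close>
lemma has_real_derivative_integral_bounded:
  fixes F F' :: "real \<Rightarrow> real \<Rightarrow> real"
  assumes "c < d" and t: "t \<in> {c..d}"
    and deriv: "\<And>y s. y \<in> {a..b} \<Longrightarrow> s \<in> {c..d} \<Longrightarrow>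
      ((\<lambda>s. F y s) has_real_derivative F' y s) (at s within {c..d})"
    and bound: "\<And>y s. y \<in> {a..b} \<Longrightarrow> s \<in> {c..d} \<Longrightarrow> \<bar>F' y s\<bar> \<le> M"
    and int: "\<And>s. s \<in> {c..d} \<Longrightarrow> (\<lambda>y. F y s) integrable_on {a..b}"
  shows "(\<lambda>y. F' y t) integrable_on {a..b}"
    and "((\<lambda>s. integral {a..b} (\<lambda>y. F y s)) has_real_derivative integral {a..b} (\<lambda>y. F' y t))
           (at t within {c..d})"
proof -
  define Q where "Q s y = (F y s - F y t) / (s - t)" for s y
  have Q_integral: "(Q s has_integral
      (integral {a..b} (\<lambda>y. F y s) - integral {a..b} (\<lambda>y. F y t)) / (s - t)) {a..b}"
    if "s \<in> {c..d}" for s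
    unfolding Q_def using int that t by (intro has_integral_divide has_integral_diff integrable_integral)
  have Q_bound: "norm (Q s y) \<le> M" if "y \<in> {a..b}" "s \<in> {c..d}" "s \<noteq> t" for s y
  proof -
    have "\<bar>F y s - F y t\<bar> \<le> M * \<bar>s - t\<bar>"
      using field_differentiable_bound[of "{c..d}" "\<lambda>s. F y s" "F' y" M s t] deriv bound that t
      by auto
    then show ?thesis using that by (simp add: Q_def abs_divide divide_le_eq)
  qed
  have Q_limit: "((\<lambda>s. Q s y) \<longlongrightarrow> F' y t) (at t within {c..d})" if "y \<in> {a..b}" for y
    using deriv[OF that t] by (simp add: Q_def has_field_derivative_iff)
  have along_sequences: "(\<lambda>y. F' y t) integrable_on {a..b} \<and>
      (\<lambda>n. integral {a..b} (Q (S n))) \<longlonglongrightarrow> integral {a..b} (\<lambda>y. F' y t)"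
    if S: "\<forall>n. S n \<noteq> t \<and> S n \<in> {c..d}" "S \<longlonglongrightarrow> t" for S
  proof -
    have "filterlim S (at t within {c..d}) sequentially"
      using S by (auto simp: filterlim_at intro!: always_eventually)
    then have "(\<lambda>n. Q (S n) y) \<longlonglongrightarrow> F' y t" if "y \<in> {a..b}" for y
      using filterlim_compose[OF Q_limit[OF that]] by blast
    moreover have "Q (S n) integrable_on {a..b}" for n
      using Q_integral S by (meson has_integral_integrable)
    ultimately show ?thesis
      using dominated_convergence[of "\<lambda>n. Q (S n)" "{a..b}" "\<lambda>y. M" "\<lambda>y. F' y t"]
        Q_bound S by auto
  qed
  have "t islimpt {c..d}" using \<open>c < d\<close> t by simp
  then obtain S where "\<forall>n. S n \<in> {c..d} - {t}" "S \<longlonglongrightarrow> t"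
    unfolding islimpt_sequential by blast
  with along_sequences show "(\<lambda>y. F' y t) integrable_on {a..b}" by blast
  show "((\<lambda>s. integral {a..b} (\<lambda>y. F y s)) has_real_derivative integral {a..b} (\<lambda>y. F' y t))
      (at t within {c..d})"
    unfolding has_field_derivative_iff
  proof (rule Lim_within_LIMSEQ, intro allI impI)
    fix S assume "(\<forall>n. S n \<noteq> t \<and> S n \<in> {c..d}) \<and> S \<longlonglongrightarrow> t"
    then show "(\<lambda>n. (integral {a..b} (\<lambda>y. F y (S n)) - integral {a..b} (\<lambda>y. F y t)) / (S n - t))
        \<longlonglongrightarrow> integral {a..b} (\<lambda>y. F' y t)"
      using along_sequences[of S] integral_unique[OF Q_integral] by auto
  qed
qed

lemma has_real_derivative_partial_integral:
  fixes f fx h :: "real \<Rightarrow> real \<Rightarrow> real"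
  assumes "c < d" and t: "t \<in> {c..d}" and x: "x \<in> {a..b}"
    and dx: "\<And>y s. y \<in> {a..b} \<Longrightarrow> s \<in> {c..d} \<Longrightarrow>
      ((\<lambda>y. f y s) has_real_derivative fx y s) (at y within {a..b})"
    and dt: "\<And>y s. y \<in> {a..b} \<Longrightarrow> s \<in> {c..d} \<Longrightarrow>
      ((\<lambda>s. fx y s) has_real_derivative h y s) (at s within {c..d})"
    and bound: "\<And>y s. y \<in> {a..b} \<Longrightarrow> s \<in> {c..d} \<Longrightarrow> \<bar>h y s\<bar> \<le> M"
    and dt_left: "((\<lambda>s. f a s) has_real_derivative D) (at t within {c..d})"
  shows "(\<lambda>y. h y t) integrable_on {a..x}"
    and "((\<lambda>s. f x s) has_real_derivative D + integral {a..x} (\<lambda>y. h y t)) (at t within {c..d})"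
proof -
  have sub: "{a..x} \<subseteq> {a..b}" using x by auto
  have ftc: "((\<lambda>y. fx y s) has_integral f x s - f a s) {a..x}" if "s \<in> {c..d}" for s
  proof (rule fundamental_theorem_of_calculus)
    show "a \<le> x" using x by simp
    fix y assume "y \<in> {a..x}"
    with sub have "((\<lambda>y. f y s) has_real_derivative fx y s) (at y within {a..x})"
      using has_field_derivative_subset[OF dx[OF _ that] sub] by blast
    then show "((\<lambda>y. f y s) has_vector_derivative fx y s) (at y within {a..x})"
      by (simp add: has_real_derivative_iff_has_vector_derivative)
  qed
  have dt': "\<And>y s. y \<in> {a..x} \<Longrightarrow> s \<in> {c..d} \<Longrightarrow>
      ((\<lambda>s. fx y s) has_real_derivative h y s) (at s within {c..d})"
    and bound': "\<And>y s. y \<in> {a..x} \<Longrightarrow> s \<in> {c..d} \<Longrightarrow> \<bar>h y s\<bar> \<le> M"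
    using dt bound sub by auto
  note under_integral =
    has_real_derivative_integral_bounded[OF \<open>c < d\<close> t dt' bound' has_integral_integrable[OF ftc]]
  then show "(\<lambda>y. h y t) integrable_on {a..x}" by blast
  show "((\<lambda>s. f x s) has_real_derivative D + integral {a..x} (\<lambda>y. h y t)) (at t within {c..d})"
  proof (rule has_field_derivative_transform_on[OF DERIV_add[OF dt_left under_integral(2)] t])
    fix s assume "s \<in> {c..d}"
    then show "f a s + integral {a..x} (\<lambda>y. fx y s) = f x s"
      using integral_unique[OF ftc] by simp
  qed
qed

text \<open>Differentiating \<open>f x s = f a s + \<integral>\<^sub>a\<^sup>x fx y s dy\<close> in \<open>s\<close> gives
  \<open>ft x t = ft a t + \<integral>\<^sub>a\<^sup>x h y t dy\<close>, which is then differentiated in \<open>x\<close>.\<close>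
lemma has_real_derivative_mixed_partials:
  fixes f fx ft h :: "real \<Rightarrow> real \<Rightarrow> real"
  assumes "a < b" "c < d" and t: "t \<in> {c..d}" and x: "x \<in> {a..b}"
    and dx: "\<And>y s. y \<in> {a..b} \<Longrightarrow> s \<in> {c..d} \<Longrightarrow>
      ((\<lambda>y. f y s) has_real_derivative fx y s) (at y within {a..b})"
    and dt: "\<And>y s. y \<in> {a..b} \<Longrightarrow> s \<in> {c..d} \<Longrightarrow>
      ((\<lambda>s. f y s) has_real_derivative ft y s) (at s within {c..d})"
    and dt_dx: "\<And>y s. y \<in> {a..b} \<Longrightarrow> s \<in> {c..d} \<Longrightarrow>
      ((\<lambda>s. fx y s) has_real_derivative h y s) (at s within {c..d})"
    and bound: "\<And>y s. y \<in> {a..b} \<Longrightarrow> s \<in> {c..d} \<Longrightarrow> \<bar>h y s\<bar> \<le> M"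
    and cont: "continuous_on {a..b} (\<lambda>y. h y t)"
  shows "((\<lambda>y. ft y t) has_real_derivative h x t) (at x within {a..b})"
proof -
  have left: "a \<in> {a..b}" using \<open>a < b\<close> by simp
  have "ft a t + integral {a..y} (\<lambda>z. h z t) = ft y t" if "y \<in> {a..b}" for y
    using has_real_derivative_unique_Icc[OF \<open>c < d\<close> t
        has_real_derivative_partial_integral(2)[OF \<open>c < d\<close> t that dx dt_dx bound dt[OF left t]]
        dt[OF that t]] .
  from has_field_derivative_transform_on[OF
      DERIV_add[OF DERIV_const integral_has_real_derivative[OF cont x]] x this]
  show ?thesis by simp
qed

text \<open>\<open>Gt\<close> need not be differentiable in \<open>y\<close>: the identity is the \<open>s\<close>-derivative of the
  integration by parts of \<open>g = \<partial>\<^sub>y G\<close> against \<open>\<phi>\<close>.\<close>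
lemma has_integral_parts_parameter_derivative:
  fixes G g Gt gt :: "real \<Rightarrow> real \<Rightarrow> real" and \<phi> \<phi>' :: "real \<Rightarrow> real"
  assumes "a < b" "c < d" and t: "t \<in> {c..d}"
    and dx: "\<And>y s. y \<in> {a..b} \<Longrightarrow> s \<in> {c..d} \<Longrightarrow>
      ((\<lambda>y. G y s) has_real_derivative g y s) (at y within {a..b})"
    and dt: "\<And>y s. y \<in> {a..b} \<Longrightarrow> s \<in> {c..d} \<Longrightarrow>
      ((\<lambda>s. G y s) has_real_derivative Gt y s) (at s within {c..d})"
    and dt_dx: "\<And>y s. y \<in> {a..b} \<Longrightarrow> s \<in> {c..d} \<Longrightarrow>
      ((\<lambda>s. g y s) has_real_derivative gt y s) (at s within {c..d})"
    and Gt_bound: "\<And>y s. y \<in> {a..b} \<Longrightarrow> s \<in> {c..d} \<Longrightarrow> \<bar>Gt y s\<bar> \<le> M"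
    and gt_bound: "\<And>y s. y \<in> {a..b} \<Longrightarrow> s \<in> {c..d} \<Longrightarrow> \<bar>gt y s\<bar> \<le> N"
    and \<phi>: "\<And>y. y \<in> {a..b} \<Longrightarrow> (\<phi> has_real_derivative \<phi>' y) (at y within {a..b})"
    and cont_\<phi>': "continuous_on {a..b} \<phi>'"
  shows "((\<lambda>y. gt y t * \<phi> y + Gt y t * \<phi>' y) has_integral Gt b t * \<phi> b - Gt a t * \<phi> a) {a..b}"
proof -
  obtain P where P: "\<And>y. y \<in> {a..b} \<Longrightarrow> \<bar>\<phi> y\<bar> \<le> P"
    using continuous_on_compact_abs_bound[OF compact_Icc has_real_derivative_within_imp_continuous_on[OF \<phi>]]
    by blast
  obtain P' where P': "\<And>y. y \<in> {a..b} \<Longrightarrow> \<bar>\<phi>' y\<bar> \<le> P'"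
    using continuous_on_compact_abs_bound[OF compact_Icc cont_\<phi>'] by blast
  have parts: "((\<lambda>y. g y s * \<phi> y + G y s * \<phi>' y) has_integral G b s * \<phi> b - G a s * \<phi> a) {a..b}"
    if "s \<in> {c..d}" for s
    using \<open>a < b\<close> dx[OF _ that] \<phi> by (intro has_integral_product_rule) auto
  have bound: "\<bar>gt y s * \<phi> y + Gt y s * \<phi>' y\<bar> \<le> N * P + M * P'"
    if "y \<in> {a..b}" "s \<in> {c..d}" for y s
    using abs_mult_le[OF gt_bound[OF that] P[OF that(1)]] abs_mult_le[OF Gt_bound[OF that] P'[OF that(1)]]
    by linarith
  have deriv: "((\<lambda>s. g y s * \<phi> y + G y s * \<phi>' y) has_real_derivative
      gt y s * \<phi> y + Gt y s * \<phi>' y) (at s within {c..d})"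
    if "y \<in> {a..b}" "s \<in> {c..d}" for y s
    using that by (intro DERIV_add DERIV_cmult_right dt dt_dx)
  note under_integral = has_real_derivative_integral_bounded[OF \<open>c < d\<close> t deriv bound
      has_integral_integrable[OF parts]]
  have "integral {a..b} (\<lambda>y. gt y t * \<phi> y + Gt y t * \<phi>' y) = Gt b t * \<phi> b - Gt a t * \<phi> a"
  proof (rule has_real_derivative_unique_Icc[OF \<open>c < d\<close> t under_integral(2)])
    show "((\<lambda>s. integral {a..b} (\<lambda>y. g y s * \<phi> y + G y s * \<phi>' y)) has_real_derivative
        Gt b t * \<phi> b - Gt a t * \<phi> a) (at t within {c..d})"
    proof (rule has_field_derivative_transform_on[OF _ t])
      show "((\<lambda>s. G b s * \<phi> b - G a s * \<phi> a) has_real_derivative Gt b t * \<phi> b - Gt a t * \<phi> a)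
          (at t within {c..d})"
        using \<open>a < b\<close> t by (intro DERIV_diff DERIV_cmult_right dt) auto
    next
      fix s assume "s \<in> {c..d}"
      then show "G b s * \<phi> b - G a s * \<phi> a = integral {a..b} (\<lambda>y. g y s * \<phi> y + G y s * \<phi>' y)"
        using integral_unique[OF parts] by simp
    qed
  qed
  with under_integral(1) show ?thesis by (simp add: has_integral_integral)
qed

section \<open>Gronwall and Sobolev inequalities\<close>

lemma gronwall_zero_initial:
  fixes E E' :: "real \<Rightarrow> real"
  assumes "0 \<le> t" "E 0 = 0"
    and deriv: "\<And>s. s \<in> {0..t} \<Longrightarrow> (E has_real_derivative E' s) (at s within {0..t})"
    and le: "\<And>s. s \<in> {0..t} \<Longrightarrow> E' s \<le> K * E s + c"
    and "0 \<le> K" "0 \<le> c"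
  shows "E t \<le> c * t * exp (K * t)"
proof -
  define G where "G s = E s * exp (- K * s) - c * s" for s
  have "G t \<le> G 0"
  proof (rule DERIV_nonpos_imp_decreasing_open[OF \<open>0 \<le> t\<close>])
    fix s assume s: "0 < s" "s < t"
    then have "(E has_real_derivative E' s) (at s)"
      using deriv[of s] at_within_Icc_at[of 0 s t] by auto
    then have "(G has_real_derivative (E' s - K * E s) * exp (- K * s) - c) (at s)"
      unfolding G_def by (auto intro!: derivative_eq_intros simp: algebra_simps)
    moreover have "(E' s - K * E s) * exp (- K * s) - c \<le> 0"
    proof -
      have "(E' s - K * E s) * exp (- K * s) \<le> c * exp (- K * s)"
        using le[of s] s by (intro mult_right_mono) auto
      also have "\<dots> \<le> c" using \<open>0 \<le> c\<close> \<open>0 \<le> K\<close> s by (intro mult_left_le) auto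
      finally show ?thesis by simp
    qed
    ultimately show "\<exists>y. (G has_real_derivative y) (at s) \<and> y \<le> 0" by blast
  next
    show "continuous_on {0..t} G"
      unfolding G_def using has_real_derivative_within_imp_continuous_on[OF deriv]
      by (intro continuous_intros)
  qed
  then have "E t * exp (- K * t) \<le> c * t" unfolding G_def using \<open>E 0 = 0\<close> by simp
  then have "E t * exp (- K * t) * exp (K * t) \<le> c * t * exp (K * t)"
    by (intro mult_right_mono) auto
  then show ?thesis by (simp add: mult.assoc flip: exp_add)
qed

lemma sq_le_integral_sq_plus_sq_deriv:
  fixes f f' :: "real \<Rightarrow> real"
  assumes "a < b"
    and deriv: "\<And>x. x \<in> {a..b} \<Longrightarrow> (f has_real_derivative f' x) (at x within {a..b})"
    and cont: "continuous_on {a..b} f'"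
    and x: "x \<in> {a..b}"
  shows "(f x)\<^sup>2 \<le> (1 / (b - a) + 1) * integral {a..b} (\<lambda>z. (f z)\<^sup>2 + (f' z)\<^sup>2)"
proof -
  define I where "I = integral {a..b} (\<lambda>z. (f z)\<^sup>2 + (f' z)\<^sup>2)"
  have cont_f: "continuous_on {a..b} f"
    by (rule has_real_derivative_within_imp_continuous_on[OF deriv])
  have integrable: "(\<lambda>z. (f z)\<^sup>2 + (f' z)\<^sup>2) integrable_on {p..q}" if "a \<le> p" "q \<le> b" for p q
    using that by (intro integrable_continuous_real continuous_intros
        continuous_on_subset[OF cont_f] continuous_on_subset[OF cont]) auto
  have oscillation: "\<bar>(f p)\<^sup>2 - (f q)\<^sup>2\<bar> \<le> I" if "a \<le> q" "q \<le> p" "p \<le> b" for p q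
  proof -
    have "((\<lambda>z. 2 * f z * f' z) has_integral (f p)\<^sup>2 - (f q)\<^sup>2) {q..p}"
    proof (rule fundamental_theorem_of_calculus)
      fix z assume "z \<in> {q..p}"
      with that have "(f has_real_derivative f' z) (at z within {q..p})"
        by (intro has_field_derivative_subset[OF deriv]) auto
      then show "((\<lambda>z. (f z)\<^sup>2) has_vector_derivative 2 * f z * f' z) (at z within {q..p})"
        unfolding has_real_derivative_iff_has_vector_derivative[symmetric]
        by (auto intro!: derivative_eq_intros)
    qed (rule that(2))
    then have "\<bar>(f p)\<^sup>2 - (f q)\<^sup>2\<bar> \<le> integral {q..p} (\<lambda>z. (f z)\<^sup>2 + (f' z)\<^sup>2)"
      using integral_norm_bound_integral[of "\<lambda>z. 2 * f z * f' z" "{q..p}"]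
        integrable[OF that(1,3)] abs_two_mult_le_sum_squares
      by (fastforce simp: integral_unique has_integral_integrable)
    also have "\<dots> \<le> I"
      unfolding I_def using that integrable[OF order_refl order_refl]
      by (intro integral_subset_le integrable) auto
    finally show ?thesis .
  qed
  have pointwise: "(f x)\<^sup>2 \<le> (f y)\<^sup>2 + I" if "y \<in> {a..b}" for y
    using oscillation[of y x] oscillation[of x y] that x by (cases "y \<le> x") auto
  have "(b - a) * (f x)\<^sup>2 = integral {a..b} (\<lambda>y. (f x)\<^sup>2)"
    using \<open>a < b\<close> by simp
  also have "\<dots> \<le> integral {a..b} (\<lambda>y. (f y)\<^sup>2 + I)"
    using pointwise by (intro integral_le integrable_continuous_real continuous_intros cont_f) auto
  also have "\<dots> = integral {a..b} (\<lambda>y. (f y)\<^sup>2) + (b - a) * I"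
    using \<open>a < b\<close> by (subst integral_add) (auto intro: integrable_continuous_real continuous_intros cont_f)
  also have "integral {a..b} (\<lambda>y. (f y)\<^sup>2) \<le> I"
    unfolding I_def
    by (intro integral_le integrable_continuous_real continuous_intros cont_f cont) auto
  finally have "(b - a) * (f x)\<^sup>2 \<le> (1 + (b - a)) * I" by (simp add: algebra_simps)
  then show ?thesis
    using \<open>a < b\<close> by (simp add: I_def field_simps)
qed

lemma has_dxD:
  "has_dx l T f g \<Longrightarrow> x \<in> {0..l} \<Longrightarrow> t \<in> {0..T} \<Longrightarrow>
    ((\<lambda>y. f y t) has_real_derivative g x t) (at x within {0..l})"
  by (simp add: has_dx_def)

lemma has_dtD:
  "has_dt l T f g \<Longrightarrow> x \<in> {0..l} \<Longrightarrow> t \<in> {0..T} \<Longrightarrow>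
    ((\<lambda>s. f x s) has_real_derivative g x t) (at t within {0..T})"
  by (simp add: has_dt_def)

lemma has_dx_diff:
  "has_dx l T f f' \<Longrightarrow> has_dx l T g g' \<Longrightarrow>
    has_dx l T (\<lambda>x t. f x t - g x t) (\<lambda>x t. f' x t - g' x t)"
  by (simp add: has_dx_def DERIV_diff)

lemma has_dt_diff:
  "has_dt l T f f' \<Longrightarrow> has_dt l T g g' \<Longrightarrow>
    has_dt l T (\<lambda>x t. f x t - g x t) (\<lambda>x t. f' x t - g' x t)"
  by (simp add: has_dt_def DERIV_diff)

lemma cont_rect_continuous_on_x:
  assumes "cont_rect l T f" "t \<in> {0..T}"
  shows "continuous_on {0..l} (\<lambda>x. f x t)"
proof -
  have "(\<lambda>x. (x, t)) ` {0..l} \<subseteq> Rect l T" using assms(2) by (auto simp: Rect_def)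
  from continuous_on_compose2[OF assms(1)[unfolded cont_rect_def] _ this] show ?thesis
    by (simp add: continuous_intros)
qed

lemma cont_rect_continuous_on_t:
  assumes "cont_rect l T f" "x \<in> {0..l}"
  shows "continuous_on {0..T} (\<lambda>t. f x t)"
proof -
  have "(\<lambda>t. (x, t)) ` {0..T} \<subseteq> Rect l T" using assms(2) by (auto simp: Rect_def)
  from continuous_on_compose2[OF assms(1)[unfolded cont_rect_def] _ this] show ?thesis
    by (simp add: continuous_intros)
qed

definition bounded_rect :: "real \<Rightarrow> real \<Rightarrow> (real \<Rightarrow> real \<Rightarrow> real) \<Rightarrow> bool" where
  "bounded_rect l T f \<longleftrightarrow> (\<exists>M. \<forall>x\<in>{0..l}. \<forall>t\<in>{0..T}. \<bar>f x t\<bar> \<le> M)"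

lemma bounded_rectE:
  assumes "bounded_rect l T f"
  obtains M where "\<And>x t. x \<in> {0..l} \<Longrightarrow> t \<in> {0..T} \<Longrightarrow> \<bar>f x t\<bar> \<le> M"
  using assms unfolding bounded_rect_def by blast

lemma cont_rect_imp_bounded_rect: "cont_rect l T f \<Longrightarrow> bounded_rect l T f"
  unfolding cont_rect_def bounded_rect_def Rect_def
  by (erule continuous_on_compact_abs_bound[OF compact_Times[OF compact_Icc compact_Icc]]) auto

lemma bounded_rect_const: "bounded_rect l T (\<lambda>x t. c)"
  unfolding bounded_rect_def by blast

lemma bounded_rect_add:
  "bounded_rect l T f \<Longrightarrow> bounded_rect l T g \<Longrightarrow> bounded_rect l T (\<lambda>x t. f x t + g x t)"
  unfolding bounded_rect_def by (fastforce intro: abs_triangle_ineq[THEN order_trans] add_mono)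

lemma bounded_rect_diff:
  "bounded_rect l T f \<Longrightarrow> bounded_rect l T g \<Longrightarrow> bounded_rect l T (\<lambda>x t. f x t - g x t)"
  unfolding bounded_rect_def by (fastforce intro: abs_triangle_ineq4[THEN order_trans] add_mono)

lemma bounded_rect_mult:
  "bounded_rect l T f \<Longrightarrow> bounded_rect l T g \<Longrightarrow> bounded_rect l T (\<lambda>x t. f x t * g x t)"
  unfolding bounded_rect_def by (fastforce intro: abs_mult_le)

section \<open>Energy estimate\<close>

lemma energy_rate_pointwise_le:
  fixes w wt wx wxt wxx S D B \<alpha> \<epsilon> b :: real
  assumes "\<bar>S\<bar> \<le> \<bar>w\<bar>" "\<bar>B\<bar> \<le> b" "0 \<le> \<alpha>" "0 \<le> \<epsilon>"
  shows "2 * (w * wt + wt * (wxx - \<alpha> * wt - S + \<epsilon> * (D + B)) + wx * wxt)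
      - 2 * (wxt * wx + wt * wxx) - 2 * \<epsilon> * (wt * D + wxt\<^sup>2)
    \<le> 3 * (w\<^sup>2 + wt\<^sup>2 + wx\<^sup>2) + \<epsilon>\<^sup>2 * b\<^sup>2"
proof -
  have expand: "2 * (w * wt + wt * (wxx - \<alpha> * wt - S + \<epsilon> * (D + B)) + wx * wxt)
      - 2 * (wxt * wx + wt * wxx) - 2 * \<epsilon> * (wt * D + wxt\<^sup>2)
    = 2 * w * wt - 2 * wt * S + 2 * (\<epsilon> * B) * wt - 2 * \<alpha> * wt\<^sup>2 - 2 * \<epsilon> * wxt\<^sup>2"
    by (simp add: algebra_simps power2_eq_square)
  have "2 * w * wt \<le> w\<^sup>2 + wt\<^sup>2"
    using abs_two_mult_le_sum_squares[of w wt] by linarith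
  moreover have "- (2 * wt * S) \<le> w\<^sup>2 + wt\<^sup>2"
  proof -
    have "S\<^sup>2 \<le> w\<^sup>2" using assms(1) by (simp add: abs_le_square_iff)
    then show ?thesis using abs_two_mult_le_sum_squares[of wt S] by linarith
  qed
  moreover have "2 * (\<epsilon> * B) * wt \<le> \<epsilon>\<^sup>2 * b\<^sup>2 + wt\<^sup>2"
  proof -
    have "B\<^sup>2 \<le> b\<^sup>2"
      using power_mono[OF assms(2), of 2] by simp
    then have "(\<epsilon> * B)\<^sup>2 \<le> \<epsilon>\<^sup>2 * b\<^sup>2"
      by (simp add: power_mult_distrib mult_left_mono)
    then show ?thesis using abs_two_mult_le_sum_squares[of "\<epsilon> * B" wt] by linarith
  qed
  moreover have "0 \<le> 2 * \<alpha> * wt\<^sup>2" "0 \<le> 2 * \<epsilon> * wxt\<^sup>2" "0 \<le> w\<^sup>2" "0 \<le> wx\<^sup>2"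
    using assms(3,4) by simp_all
  ultimately show ?thesis unfolding expand by (smt (verit))
qed

locale neumann_difference =
  fixes l T \<alpha> \<epsilon> b \<gamma> :: real
    and u ux uxx ut utt uxt uxxt :: "real \<Rightarrow> real \<Rightarrow> real"
    and U Ux Uxx Ut Utt Uxxt :: "real \<Rightarrow> real \<Rightarrow> real"
  assumes l_pos: "0 < l" and T_pos: "0 < T" and \<alpha>_nonneg: "0 \<le> \<alpha>" and \<epsilon>_nonneg: "0 \<le> \<epsilon>"
    and cont_u: "cont_rect l T u" "cont_rect l T ux" "cont_rect l T ut" "cont_rect l T utt"
      "cont_rect l T uxt"
    and cont_U: "cont_rect l T U" "cont_rect l T Ux" "cont_rect l T Ut" "cont_rect l T Utt"
    and deriv_u: "has_dx l T u ux" "has_dx l T ux uxx" "has_dt l T u ut" "has_dt l T ut utt"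
      "has_dx l T ut uxt" "has_dx l T uxt uxxt"
    and deriv_U: "has_dx l T U Ux" "has_dx l T Ux Uxx" "has_dt l T U Ut" "has_dt l T Ut Utt"
      "has_dt l T Uxx Uxxt"
    and equation_u: "\<And>x t. x \<in> {0..l} \<Longrightarrow> t \<in> {0..T} \<Longrightarrow>
      (\<epsilon> * uxxt x t + uxx x t) - (utt x t + \<alpha> * ut x t) = sin (u x t) + \<gamma>"
    and equation_U: "\<And>x t. x \<in> {0..l} \<Longrightarrow> t \<in> {0..T} \<Longrightarrow>
      Uxx x t - (Utt x t + \<alpha> * Ut x t) = sin (U x t) + \<gamma>"
    and initial: "\<And>x. x \<in> {0..l} \<Longrightarrow> u x 0 = U x 0" "\<And>x. x \<in> {0..l} \<Longrightarrow> ut x 0 = Ut x 0"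
    and boundary: "\<And>t. t \<in> {0..T} \<Longrightarrow> ux 0 t = Ux 0 t" "\<And>t. t \<in> {0..T} \<Longrightarrow> ux l t = Ux l t"
    and Uxxt_bound: "\<And>x t. x \<in> {0..l} \<Longrightarrow> t \<in> {0..T} \<Longrightarrow> \<bar>Uxxt x t\<bar> \<le> b"
begin

lemma b_nonneg: "0 \<le> b"
  using Uxxt_bound[of 0 0] l_pos T_pos by fastforce

lemma ux_dt: "has_dt l T ux uxt"
  unfolding has_dt_def
proof (intro ballI)
  fix x t assume x: "x \<in> {0..l}" and t: "t \<in> {0..T}"
  obtain M where "\<And>y s. y \<in> {0..l} \<Longrightarrow> s \<in> {0..T} \<Longrightarrow> \<bar>uxt y s\<bar> \<le> M"
    using bounded_rectE[OF cont_rect_imp_bounded_rect[OF cont_u(5)]] by blast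
  then show "((\<lambda>s. ux x s) has_real_derivative uxt x t) (at t within {0..T})"
    by (intro has_real_derivative_mixed_partials[where f = "\<lambda>s y. u y s" and fx = "\<lambda>s y. ut y s"
          and ft = "\<lambda>s y. ux y s" and h = "\<lambda>s y. uxt y s", OF T_pos l_pos x t]
        has_dtD[OF deriv_u(3)] has_dxD[OF deriv_u(1)] has_dxD[OF deriv_u(5)]
        cont_rect_continuous_on_t[OF cont_u(5) x])
qed

text \<open>The mixed derivative of \<open>U\<close> is not part of the data. It is recovered from \<open>u\<^sub>x\<^sub>t\<close> at
  \<open>x = 0\<close>, where \<open>U\<^sub>x = u\<^sub>x\<close>, by integrating \<open>U\<^sub>x\<^sub>x\<^sub>t\<close>.\<close>
definition Uxt :: "real \<Rightarrow> real \<Rightarrow> real" where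
  "Uxt x t = uxt 0 t + integral {0..x} (\<lambda>y. Uxxt y t)"

lemma Ux_dt_within:
  assumes x: "x \<in> {0..l}" and t: "t \<in> {0..T}"
  shows "(\<lambda>y. Uxxt y t) integrable_on {0..x}"
    and "((\<lambda>s. Ux x s) has_real_derivative Uxt x t) (at t within {0..T})"
proof -
  have "((\<lambda>s. Ux 0 s) has_real_derivative uxt 0 t) (at t within {0..T})"
    using has_field_derivative_transform_on[OF has_dtD[OF ux_dt] t] boundary(1) l_pos t by simp
  note partial = has_real_derivative_partial_integral[OF T_pos t x
      has_dxD[OF deriv_U(2)] has_dtD[OF deriv_U(5)] Uxxt_bound this]
  then show "(\<lambda>y. Uxxt y t) integrable_on {0..x}" by blast
  from partial(2) show "((\<lambda>s. Ux x s) has_real_derivative Uxt x t) (at t within {0..T})"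
    by (simp add: Uxt_def)
qed

lemma Ux_dt: "has_dt l T Ux Uxt"
  by (simp add: has_dt_def Ux_dt_within(2))

lemma Uxt_continuous_on: "t \<in> {0..T} \<Longrightarrow> continuous_on {0..l} (\<lambda>x. Uxt x t)"
  unfolding Uxt_def using l_pos
  by (intro continuous_intros indefinite_integral_continuous_1 Ux_dt_within(1)) auto

lemma Uxt_bounded: "bounded_rect l T Uxt"
proof -
  obtain M where M: "\<And>x t. x \<in> {0..l} \<Longrightarrow> t \<in> {0..T} \<Longrightarrow> \<bar>uxt x t\<bar> \<le> M"
    using bounded_rectE[OF cont_rect_imp_bounded_rect[OF cont_u(5)]] by blast
  have "\<bar>Uxt x t\<bar> \<le> M + b * l" if x: "x \<in> {0..l}" and t: "t \<in> {0..T}" for x t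
  proof -
    have "\<bar>integral {0..x} (\<lambda>y. Uxxt y t)\<bar> \<le> b * x"
      using has_integral_bound_real[OF b_nonneg finite.emptyI
          has_integral_integral[THEN iffD1, OF Ux_dt_within(1)[OF x t]]]
        Uxxt_bound[OF _ t] x by auto
    also have "\<dots> \<le> b * l" using x b_nonneg by (intro mult_left_mono) auto
    finally show ?thesis using M[of 0 t] l_pos t unfolding Uxt_def by auto
  qed
  then show ?thesis unfolding bounded_rect_def by blast
qed

lemma Ut_dx: "has_dx l T Ut Uxt"
  unfolding has_dx_def
proof (intro ballI)
  fix x t assume x: "x \<in> {0..l}" and t: "t \<in> {0..T}"
  obtain M where "\<And>y s. y \<in> {0..l} \<Longrightarrow> s \<in> {0..T} \<Longrightarrow> \<bar>Uxt y s\<bar> \<le> M"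
    using bounded_rectE[OF Uxt_bounded] by blast
  then show "((\<lambda>y. Ut y t) has_real_derivative Uxt x t) (at x within {0..l})"
    by (intro has_real_derivative_mixed_partials[where f = U and fx = Ux, OF l_pos T_pos t x]
        has_dxD[OF deriv_U(1)] has_dtD[OF deriv_U(3)] has_dtD[OF Ux_dt] Uxt_continuous_on[OF t])
qed

lemma Uxt_boundary:
  assumes t: "t \<in> {0..T}"
  shows "Uxt 0 t = uxt 0 t" and "Uxt l t = uxt l t"
proof -
  show "Uxt 0 t = uxt 0 t" by (simp add: Uxt_def)
  have l: "l \<in> {0..l}" using l_pos by simp
  show "Uxt l t = uxt l t"
    using has_field_derivative_transform_on[OF has_dtD[OF ux_dt l t] t] boundary(2)
    by (intro has_real_derivative_unique_Icc[OF T_pos t has_dtD[OF Ux_dt l t]]) simp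
qed

abbreviation w :: "real \<Rightarrow> real \<Rightarrow> real" where "w x t \<equiv> u x t - U x t"
abbreviation wx :: "real \<Rightarrow> real \<Rightarrow> real" where "wx x t \<equiv> ux x t - Ux x t"
abbreviation wxx :: "real \<Rightarrow> real \<Rightarrow> real" where "wxx x t \<equiv> uxx x t - Uxx x t"
abbreviation wt :: "real \<Rightarrow> real \<Rightarrow> real" where "wt x t \<equiv> ut x t - Ut x t"
abbreviation wtt :: "real \<Rightarrow> real \<Rightarrow> real" where "wtt x t \<equiv> utt x t - Utt x t"
abbreviation wxt :: "real \<Rightarrow> real \<Rightarrow> real" where "wxt x t \<equiv> uxt x t - Uxt x t"

lemma wt_dx: "has_dx l T wt wxt"
  by (rule has_dx_diff[OF deriv_u(5) Ut_dx])

lemma neumann_parts: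
  assumes t: "t \<in> {0..T}"
  shows "((\<lambda>x. wxt x t * wx x t + wt x t * wxx x t) has_integral 0) {0..l}"
  using has_integral_product_rule[of 0 l "\<lambda>x. wt x t" "\<lambda>x. wxt x t" "\<lambda>x. wx x t" "\<lambda>x. wxx x t"]
    has_dxD[OF wt_dx _ t] has_dxD[OF has_dx_diff[OF deriv_u(2) deriv_U(2)] _ t] boundary[OF t] l_pos
  by simp

text \<open>The boundary terms cancel because \<open>U\<^sub>x\<^sub>t = u\<^sub>x\<^sub>t\<close> at \<open>x = 0\<close> and \<open>x = l\<close>.\<close>
lemma viscous_parts:
  assumes t: "t \<in> {0..T}"
  shows "((\<lambda>x. wt x t * (uxxt x t - Uxxt x t) + (wxt x t)\<^sup>2) has_integral 0) {0..l}"
proof -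
  have u_parts: "((\<lambda>x. wxt x t * uxt x t + wt x t * uxxt x t) has_integral
      wt l t * uxt l t - wt 0 t * uxt 0 t) {0..l}"
    using l_pos has_dxD[OF wt_dx _ t] has_dxD[OF deriv_u(6) _ t]
    by (intro has_integral_product_rule) auto
  obtain M where "\<And>y s. y \<in> {0..l} \<Longrightarrow> s \<in> {0..T} \<Longrightarrow> \<bar>Uxt y s\<bar> \<le> M"
    using bounded_rectE[OF Uxt_bounded] by blast
  then have U_parts: "((\<lambda>x. Uxxt x t * wt x t + Uxt x t * wxt x t) has_integral
      Uxt l t * wt l t - Uxt 0 t * wt 0 t) {0..l}"
    by (intro has_integral_parts_parameter_derivative[OF l_pos T_pos t
          has_dxD[OF deriv_U(2)] has_dtD[OF Ux_dt] has_dtD[OF deriv_U(5)] _ Uxxt_bound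
          has_dxD[OF wt_dx _ t]]
        continuous_intros cont_rect_continuous_on_x[OF cont_u(5) t] Uxt_continuous_on[OF t])
  from has_integral_diff[OF u_parts U_parts] show ?thesis
    using Uxt_boundary[OF t] by (simp add: algebra_simps power2_eq_square)
qed

lemma difference_continuous_on:
  assumes t: "t \<in> {0..T}"
  shows "continuous_on {0..l} (\<lambda>x. w x t)" "continuous_on {0..l} (\<lambda>x. wt x t)"
    "continuous_on {0..l} (\<lambda>x. wx x t)"
  by (intro continuous_on_diff cont_rect_continuous_on_x[OF cont_u(1) t] cont_rect_continuous_on_x[OF cont_U(1) t]
      cont_rect_continuous_on_x[OF cont_u(3) t] cont_rect_continuous_on_x[OF cont_U(3) t]
      cont_rect_continuous_on_x[OF cont_u(2) t] cont_rect_continuous_on_x[OF cont_U(2) t])+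

definition energy :: "real \<Rightarrow> real" where
  "energy t = integral {0..l} (\<lambda>x. (w x t)\<^sup>2 + (wt x t)\<^sup>2 + (wx x t)\<^sup>2)"

lemma energy_density_integrable:
  "t \<in> {0..T} \<Longrightarrow> (\<lambda>x. (w x t)\<^sup>2 + (wt x t)\<^sup>2 + (wx x t)\<^sup>2) integrable_on {0..l}"
  by (intro integrable_continuous_real continuous_intros difference_continuous_on)

lemma energy_has_derivative:
  assumes t: "t \<in> {0..T}"
  shows "(\<lambda>x. 2 * (w x t * wt x t + wt x t * wtt x t + wx x t * wxt x t)) integrable_on {0..l}"
    and "(energy has_real_derivative
      integral {0..l} (\<lambda>x. 2 * (w x t * wt x t + wt x t * wtt x t + wx x t * wxt x t)))
      (at t within {0..T})"
proof -
  have bounded: "bounded_rect l T (\<lambda>x t. 2 * (w x t * wt x t + wt x t * wtt x t + wx x t * wxt x t))"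
    by (intro bounded_rect_mult bounded_rect_add bounded_rect_diff bounded_rect_const Uxt_bounded
        cont_rect_imp_bounded_rect cont_u cont_U)
  obtain M where bound: "\<And>x s. x \<in> {0..l} \<Longrightarrow> s \<in> {0..T} \<Longrightarrow>
      \<bar>2 * (w x s * wt x s + wt x s * wtt x s + wx x s * wxt x s)\<bar> \<le> M"
    using bounded_rectE[OF bounded] by blast
  have deriv: "((\<lambda>s. (w x s)\<^sup>2 + (wt x s)\<^sup>2 + (wx x s)\<^sup>2) has_real_derivative
      2 * (w x s * wt x s + wt x s * wtt x s + wx x s * wxt x s)) (at s within {0..T})"
    if "x \<in> {0..l}" "s \<in> {0..T}" for x s
    using DERIV_add[OF DERIV_add[OF DERIV_power[OF has_dtD[OF has_dt_diff[OF deriv_u(3) deriv_U(3)] that]]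
          DERIV_power[OF has_dtD[OF has_dt_diff[OF deriv_u(4) deriv_U(4)] that]]]
        DERIV_power[OF has_dtD[OF has_dt_diff[OF ux_dt Ux_dt] that]], of 2 2 2]
    by (rule DERIV_cong) (simp add: algebra_simps)
  note under_integral =
    has_real_derivative_integral_bounded[OF T_pos t deriv bound energy_density_integrable]
  then show "(\<lambda>x. 2 * (w x t * wt x t + wt x t * wtt x t + wx x t * wxt x t)) integrable_on {0..l}"
    by blast
  from under_integral(2) show "(energy has_real_derivative
      integral {0..l} (\<lambda>x. 2 * (w x t * wt x t + wt x t * wtt x t + wx x t * wxt x t)))
      (at t within {0..T})"
    unfolding energy_def by simp
qed

lemma energy_rate_le:
  assumes t: "t \<in> {0..T}"
  shows "integral {0..l} (\<lambda>x. 2 * (w x t * wt x t + wt x t * wtt x t + wx x t * wxt x t))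
    \<le> 3 * energy t + \<epsilon>\<^sup>2 * b\<^sup>2 * l"
proof -
  have wtt_eq: "wtt x t = wxx x t - \<alpha> * wt x t - (sin (u x t) - sin (U x t))
      + \<epsilon> * ((uxxt x t - Uxxt x t) + Uxxt x t)" if "x \<in> {0..l}" for x
    using equation_u[OF that t] equation_U[OF that t] by (simp add: algebra_simps)
  have "((\<lambda>x. 2 * (w x t * wt x t + wt x t * wtt x t + wx x t * wxt x t)
        - 2 * (wxt x t * wx x t + wt x t * wxx x t)
        - 2 * \<epsilon> * (wt x t * (uxxt x t - Uxxt x t) + (wxt x t)\<^sup>2))
      has_integral integral {0..l} (\<lambda>x. 2 * (w x t * wt x t + wt x t * wtt x t + wx x t * wxt x t)))
      {0..l}"
    using has_integral_diff[OF has_integral_diff[OF energy_has_derivative(1)[OF t, THEN integrable_integral]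
          has_integral_mult_right[OF neumann_parts[OF t], of 2]]
        has_integral_mult_right[OF viscous_parts[OF t], of "2 * \<epsilon>"]]
    by (simp only: mult_zero_right diff_zero)
  moreover have "((\<lambda>x. 3 * ((w x t)\<^sup>2 + (wt x t)\<^sup>2 + (wx x t)\<^sup>2) + \<epsilon>\<^sup>2 * b\<^sup>2) has_integral
      3 * energy t + \<epsilon>\<^sup>2 * b\<^sup>2 * l) {0..l}"
  proof -
    have "((\<lambda>x. (w x t)\<^sup>2 + (wt x t)\<^sup>2 + (wx x t)\<^sup>2) has_integral energy t) {0..l}"
      unfolding energy_def using energy_density_integrable[OF t] by (rule integrable_integral)
    from has_integral_add[OF has_integral_mult_right[OF this, of 3]
        has_integral_const_real[of "\<epsilon>\<^sup>2 * b\<^sup>2" 0 l]]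
    show ?thesis using l_pos by (simp add: mult.commute)
  qed
  moreover have "2 * (w x t * wt x t + wt x t * wtt x t + wx x t * wxt x t)
        - 2 * (wxt x t * wx x t + wt x t * wxx x t)
        - 2 * \<epsilon> * (wt x t * (uxxt x t - Uxxt x t) + (wxt x t)\<^sup>2)
      \<le> 3 * ((w x t)\<^sup>2 + (wt x t)\<^sup>2 + (wx x t)\<^sup>2) + \<epsilon>\<^sup>2 * b\<^sup>2" if "x \<in> {0..l}" for x
    unfolding wtt_eq[OF that]
    by (rule energy_rate_pointwise_le[OF abs_sin_diff_le Uxxt_bound[OF that t] \<alpha>_nonneg \<epsilon>_nonneg])
  ultimately show ?thesis by (rule has_integral_le)
qed

lemma energy_initial: "energy 0 = 0"
proof -
  have T0: "0 \<in> {0..T}" using T_pos by simp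
  have "ux x 0 = Ux x 0" if x: "x \<in> {0..l}" for x
    using has_field_derivative_transform_on[OF has_dxD[OF deriv_U(1) x T0] x] initial(1)
    by (intro has_real_derivative_unique_Icc[OF l_pos x has_dxD[OF deriv_u(1) x T0]]) simp
  then have "(w x 0)\<^sup>2 + (wt x 0)\<^sup>2 + (wx x 0)\<^sup>2 = 0" if "x \<in> {0..l}" for x
    using initial that by simp
  then show ?thesis
    unfolding energy_def by (subst integral_cong[where g = "\<lambda>x. 0"]) auto
qed

lemma energy_le:
  assumes t: "t \<in> {0..T}"
  shows "energy t \<le> \<epsilon>\<^sup>2 * b\<^sup>2 * l * T * exp (3 * T)"
proof -
  have "energy t \<le> \<epsilon>\<^sup>2 * b\<^sup>2 * l * t * exp (3 * t)"
  proof (rule gronwall_zero_initial[where E' = "\<lambda>s. integral {0..l}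
      (\<lambda>x. 2 * (w x s * wt x s + wt x s * wtt x s + wx x s * wxt x s))"])
    fix s assume s: "s \<in> {0..t}"
    then have "s \<in> {0..T}" using t by auto
    show "(energy has_real_derivative
        integral {0..l} (\<lambda>x. 2 * (w x s * wt x s + wt x s * wtt x s + wx x s * wxt x s)))
        (at s within {0..t})"
      by (rule has_field_derivative_subset[OF energy_has_derivative(2)[OF \<open>s \<in> {0..T}\<close>]])
        (use t in auto)
    show "integral {0..l} (\<lambda>x. 2 * (w x s * wt x s + wt x s * wtt x s + wx x s * wxt x s))
        \<le> 3 * energy s + \<epsilon>\<^sup>2 * b\<^sup>2 * l"
      using energy_rate_le \<open>s \<in> {0..T}\<close> .
  qed (use t l_pos energy_initial in auto)
  also have "\<dots> \<le> \<epsilon>\<^sup>2 * b\<^sup>2 * l * T * exp (3 * T)"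
    using t l_pos by (intro mult_mono mult_left_mono) auto
  finally show ?thesis .
qed

lemma difference_le:
  assumes x: "x \<in> {0..l}" and t: "t \<in> {0..T}"
  shows "\<bar>u x t - U x t\<bar> \<le> \<epsilon> * sqrt ((1 / l + 1) * (b\<^sup>2 * l * T * exp (3 * T)))"
proof -
  have "(w x t)\<^sup>2 \<le> (1 / l + 1) * integral {0..l} (\<lambda>z. (w z t)\<^sup>2 + (wx z t)\<^sup>2)"
    using sq_le_integral_sq_plus_sq_deriv[OF l_pos has_dxD[OF has_dx_diff[OF deriv_u(1) deriv_U(1)] _ t]
        difference_continuous_on(3)[OF t] x] by simp
  also have "\<dots> \<le> (1 / l + 1) * energy t"
    unfolding energy_def using l_pos
    by (intro mult_left_mono integral_le energy_density_integrable[OF t] integrable_continuous_real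
        continuous_intros difference_continuous_on[OF t]) auto
  also have "\<dots> \<le> (1 / l + 1) * (\<epsilon>\<^sup>2 * b\<^sup>2 * l * T * exp (3 * T))"
    using energy_le[OF t] l_pos by (intro mult_left_mono) auto
  also have "\<dots> = (\<epsilon> * sqrt ((1 / l + 1) * (b\<^sup>2 * l * T * exp (3 * T))))\<^sup>2"
    using l_pos T_pos \<epsilon>_nonneg by (simp add: power_mult_distrib algebra_simps)
  finally have "(w x t)\<^sup>2 \<le> (\<epsilon> * sqrt ((1 / l + 1) * (b\<^sup>2 * l * T * exp (3 * T))))\<^sup>2" .
  moreover have "0 \<le> \<epsilon> * sqrt ((1 / l + 1) * (b\<^sup>2 * l * T * exp (3 * T)))"
    using \<epsilon>_nonneg l_pos T_pos by simp
  ultimately show ?thesis by (simp add: power2_le_iff_abs_le)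
qed

end

lemma solutions_difference_le:
  assumes "0 < l" "0 < T" "0 \<le> \<alpha>" "0 \<le> \<epsilon>"
    and "regular_sol l T \<alpha> \<gamma> \<epsilon> h0 h1 \<phi>0 \<phi>1 u"
    and "reduced_sol_bounded l T \<alpha> \<gamma> h0 h1 \<phi>0 \<phi>1 b U"
    and x: "x \<in> {0..l}" and t: "t \<in> {0..T}"
  shows "\<bar>u x t - U x t\<bar> \<le> \<epsilon> * sqrt ((1 / l + 1) * (b\<^sup>2 * l * T * exp (3 * T)))"
proof -
  obtain ux uxx ut utt uxt uxxt where u:
    "cont_rect l T u" "cont_rect l T ux" "cont_rect l T ut" "cont_rect l T utt" "cont_rect l T uxt"
    "has_dx l T u ux" "has_dx l T ux uxx" "has_dt l T u ut" "has_dt l T ut utt"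
    "has_dx l T ut uxt" "has_dx l T uxt uxxt"
    "\<forall>x\<in>{0..l}. \<forall>t\<in>{0..T}. (\<epsilon> * uxxt x t + uxx x t) - (utt x t + \<alpha> * ut x t) = sin (u x t) + \<gamma>"
    "\<forall>x\<in>{0..l}. u x 0 = h0 x \<and> ut x 0 = h1 x" "\<forall>t\<in>{0..T}. ux 0 t = \<phi>0 t \<and> ux l t = \<phi>1 t"
    using assms(5) unfolding regular_sol_def by blast
  obtain Ux Uxx Ut Utt Uxxt where U:
    "cont_rect l T U" "cont_rect l T Ux" "cont_rect l T Ut" "cont_rect l T Utt"
    "has_dx l T U Ux" "has_dx l T Ux Uxx" "has_dt l T U Ut" "has_dt l T Ut Utt" "has_dt l T Uxx Uxxt"
    "\<forall>x\<in>{0..l}. \<forall>t\<in>{0..T}. Uxx x t - (Utt x t + \<alpha> * Ut x t) = sin (U x t) + \<gamma>"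
    "\<forall>x\<in>{0..l}. U x 0 = h0 x \<and> Ut x 0 = h1 x" "\<forall>t\<in>{0..T}. Ux 0 t = \<phi>0 t \<and> Ux l t = \<phi>1 t"
    "\<forall>x\<in>{0..l}. \<forall>t\<in>{0..T}. \<bar>Uxxt x t\<bar> \<le> b"
    using assms(6) unfolding reduced_sol_bounded_def by blast
  interpret neumann_difference l T \<alpha> \<epsilon> b \<gamma> u ux uxx ut utt uxt uxxt U Ux Uxx Ut Utt Uxxt
    using assms(1-4) u U by unfold_locales auto
  show ?thesis by (rule difference_le[OF x t])
qed

theorem theorem4:
  fixes l T \<alpha> \<gamma> b k :: real
    and h0 h1 \<phi>0 \<phi>1 :: "real \<Rightarrow> real"
    and u :: "real \<Rightarrow> real \<Rightarrow> real \<Rightarrow> real"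
    and U :: "real \<Rightarrow> real \<Rightarrow> real"
  assumes "l > 0" "T > 0" "0 < \<alpha>" "\<alpha> < 1"
    and usol: "\<And>\<epsilon>. 0 < \<epsilon> \<Longrightarrow> \<epsilon> < 1 \<Longrightarrow> regular_sol l T \<alpha> \<gamma> \<epsilon> h0 h1 \<phi>0 \<phi>1 (u \<epsilon>)"
    and "b > 0"
    and Usol: "reduced_sol_bounded l T \<alpha> \<gamma> h0 h1 \<phi>0 \<phi>1 b U"
    and "0 < k" "k < \<alpha>"
  shows "\<exists>\<Gamma>>0. \<forall>\<epsilon>. 0 < \<epsilon> \<and> \<epsilon> < 1 \<longrightarrow>
           (\<forall>t. 1 \<le> t \<and> t < ln (1 / \<epsilon> powr k) \<and> t \<le> T \<longrightarrow>
              0 \<le> (SUP x\<in>{0..l}. \<bar>u \<epsilon> x t - U x t\<bar>) \<and>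
              (SUP x\<in>{0..l}. \<bar>u \<epsilon> x t - U x t\<bar>)
                \<le> \<Gamma> * \<epsilon> powr (1 - k / \<alpha>) * ln (1 / \<epsilon> powr k))"
proof -
  \<comment> \<open>The bound is uniform on \<open>[0, T]\<close>.\<close>
  define \<Gamma> where "\<Gamma> = sqrt ((1 / l + 1) * (b\<^sup>2 * l * T * exp (3 * T)))"
  have "0 < \<Gamma>" using assms(1,2,6) by (simp add: \<Gamma>_def add_pos_pos)
  moreover have "0 \<le> (SUP x\<in>{0..l}. \<bar>u \<epsilon> x t - U x t\<bar>) \<and>
      (SUP x\<in>{0..l}. \<bar>u \<epsilon> x t - U x t\<bar>) \<le> \<Gamma> * \<epsilon> powr (1 - k / \<alpha>) * ln (1 / \<epsilon> powr k)"
    if \<epsilon>: "0 < \<epsilon>" "\<epsilon> < 1" and t: "1 \<le> t" "t < ln (1 / \<epsilon> powr k)" "t \<le> T" for \<epsilon> t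
  proof -
    have bound: "\<bar>u \<epsilon> x t - U x t\<bar> \<le> \<epsilon> * \<Gamma>" if "x \<in> {0..l}" for x
      unfolding \<Gamma>_def using assms(1-3) \<epsilon> t that
      by (intro solutions_difference_le[OF _ _ _ _ usol[OF \<epsilon>] Usol]) auto
    then have "bdd_above ((\<lambda>x. \<bar>u \<epsilon> x t - U x t\<bar>) ` {0..l})" by (intro bdd_aboveI2)
    then have "0 \<le> (SUP x\<in>{0..l}. \<bar>u \<epsilon> x t - U x t\<bar>)"
      using assms(1) by (intro cSUP_upper2[of _ _ 0]) auto
    moreover have "(SUP x\<in>{0..l}. \<bar>u \<epsilon> x t - U x t\<bar>) \<le> \<epsilon> * \<Gamma>"
      using bound assms(1) by (intro cSUP_least) auto
    moreover have "\<epsilon> \<le> \<epsilon> powr (1 - k / \<alpha>) * ln (1 / \<epsilon> powr k)"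
      using \<epsilon> t assms(3,8) by (intro self_le_powr_mult) auto
    then have "\<epsilon> * \<Gamma> \<le> \<Gamma> * \<epsilon> powr (1 - k / \<alpha>) * ln (1 / \<epsilon> powr k)"
      using \<open>0 < \<Gamma>\<close> by (simp add: mult.commute mult.left_commute)
    ultimately show ?thesis by linarith
  qed
  ultimately show ?thesis by blast
qed

end
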